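(* Let $\mathcal{P}\subseteq\mathcal{S}\subseteq\mathcal{T}$ be group properties. Suppose that for every nonempty set of the form $\mathcal{B}=\{G\in\mathcal{S}: \forall i,j\le k\ (G(i,j)=m_{i,j})\}$ (with $k\in\mathbb{N}$, $m_{i,j}\in\mathbb{N}$) there exist $G_0\in\mathcal{B}$, $H\in\mathcal{P}$ and a group homomorphism $\varphi:(\mathbb{N},G_0)\to(\mathbb{N},H)$ such that $\varphi$ restricted to $\operatorname{supp}\mathcal{B}=\{1,\dots,k\}\cup\{m_{i,j}: i,j\le k\}$ is injective. Then $\mathcal{P}$ is dense in $\mathcal{S}$.
   Context: Let $\mathbb{N}^{\mathbb{N}\times\mathbb{N}}$ be the space of functions $\mathbb{N}\times\mathbb{N}\to\mathbb{N}$ with the product of discrete topologies. Let $\mathcal{A}=\{G\in\mathbb{N}^{\mathbb{N}\times\mathbb{N}}: G \text{ is an abelian group operation on } \mathbb{N} \text{ with identity element } 0\}$ and $\mathcal{T}=\{G\in\mathcal{A}: (\mathbb{N},G)\text{ is torsion-free}\}$, with the subspace topology. A set $\mathcal{P}\subseteq\mathcal{T}$ is a group property if it is isomorphism invariant: for any $G\in\mathcal{T}$, if $(\mathbb{N},G)$ is isomorphic to $(\mathbb{N},H)$ for some $H\in\mathcal{P}$, then $G\in\mathcal{P}$. *)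

theory Defs
  imports "HOL-Analysis.Analysis" "HOL-Algebra.Group"
begin

definition grp :: "(nat \<times> nat \<Rightarrow> nat) \<Rightarrow> nat monoid" where
  "grp G = \<lparr>carrier = UNIV, mult = (\<lambda>a b. G (a, b)), one = 0\<rparr>"

definition A_ops :: "(nat \<times> nat \<Rightarrow> nat) set" where
  "A_ops = {G. comm_group (grp G)}"

definition T_ops :: "(nat \<times> nat \<Rightarrow> nat) set" where
  "T_ops = {G \<in> A_ops. \<forall>a n. a \<noteq> 0 \<and> n > 0 \<longrightarrow> a [^]\<^bsub>grp G\<^esub> (n::nat) \<noteq> (0::nat)}"

definition group_property :: "(nat \<times> nat \<Rightarrow> nat) set \<Rightarrow> bool" where
  "group_property P \<longleftrightarrow> P \<subseteq> T_ops \<and>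
     (\<forall>G \<in> T_ops. \<forall>H \<in> P. grp G \<cong> grp H \<longrightarrow> G \<in> P)"

definition op_topology :: "(nat \<times> nat \<Rightarrow> nat) topology" where
  "op_topology = product_topology (\<lambda>_. discrete_topology UNIV) UNIV"

end

theory Submission
  imports Defs "HOL-Library.Infinite_Set"
begin

text \<open>A basic open neighbourhood of K in the product of discrete topologies consists of the
operations agreeing with K on finitely many pairs, hence on a square {..k} \<times> {..k}. So K is
in the closure of P once every such finite table of K is realised by some H \<in> P. Given the
table, the hypothesis yields a homomorphism \<phi> from an operation G0 with the same table
into some H \<in> P, injective on the finite support D of the table. Extending \<phi>|D to a
bijection \<psi> of \<nat> and pulling H back along \<psi> gives an isomorphic copy of H, still in P
by isomorphism invariance, and on D it multiplies exactly like G0, i.e. it has the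
prescribed table.\<close>

lemma op_topology_open_contains_square_cylinder:
  assumes "openin op_topology U" "K \<in> U"
  obtains k :: nat where "\<And>H. \<forall>i\<le>k. \<forall>j\<le>k. H (i, j) = K (i, j) \<Longrightarrow> H \<in> U"
proof -
  obtain V where V: "finite {p. V p \<noteq> UNIV}" "K \<in> Pi\<^sub>E UNIV V" "Pi\<^sub>E UNIV V \<subseteq> U"
    using assms unfolding op_topology_def openin_product_topology_alt by auto
  define k where "k = Max (fst ` {p. V p \<noteq> UNIV} \<union> snd ` {p. V p \<noteq> UNIV} \<union> {0})"
  have bound: "fst p \<le> k \<and> snd p \<le> k" if "V p \<noteq> UNIV" for p
    unfolding k_def using V(1) that by (auto intro: Max_ge)
  show thesis
  proof (rule that)
    fix H assume agree: "\<forall>i\<le>k. \<forall>j\<le>k. H (i, j) = K (i, j)"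
    have "H p \<in> V p" for p
    proof (cases "V p = UNIV")
      case False
      then have "fst p \<le> k" "snd p \<le> k"
        using bound by auto
      then have "H p = K p"
        using agree by (cases p) simp
      then show ?thesis using V(2) by auto
    qed simp
    then show "H \<in> U" using V(3) by auto
  qed
qed

lemma in_closure_of_op_topology_if_squares_realised:
  assumes "K \<in> S" and "\<And>k::nat. \<exists>H \<in> P \<inter> S. \<forall>i\<le>k. \<forall>j\<le>k. H (i, j) = K (i, j)"
  shows "K \<in> (subtopology op_topology S) closure_of P"
  unfolding in_closure_of
proof (intro conjI allI impI)
  show "K \<in> topspace (subtopology op_topology S)"
    using assms(1) by (simp add: op_topology_def)
  fix T assume "K \<in> T \<and> openin (subtopology op_topology S) T"
  then obtain U where U: "openin op_topology U" "T = U \<inter> S" "K \<in> U"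
    by (auto simp: openin_subtopology)
  obtain k where "\<And>H. \<forall>i\<le>k. \<forall>j\<le>k. H (i, j) = K (i, j) \<Longrightarrow> H \<in> U"
    using op_topology_open_contains_square_cylinder[OF U(1,3)] by blast
  then show "\<exists>H. H \<in> P \<and> H \<in> T"
    using assms(2)[of k] U(2) by blast
qed

lemma inj_on_finite_extends_to_bij:
  fixes \<phi> :: "nat \<Rightarrow> nat"
  assumes "finite D" "inj_on \<phi> D"
  obtains \<psi> where "bij \<psi>" "\<And>x. x \<in> D \<Longrightarrow> \<psi> x = \<phi> x"
proof -
  have "infinite (UNIV - D)" "infinite (UNIV - \<phi> ` D)"
    using assms(1) by (simp_all add: Diff_infinite_finite)
  from bij_betw_trans[OF bij_betw_inv_into[OF bij_enumerate[OF this(1)]] bij_enumerate[OF this(2)]]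
  obtain e where e: "bij_betw e (UNIV - D) (UNIV - \<phi> ` D)"
    by blast
  have "bij_betw \<phi> D (\<phi> ` D)"
    using assms(2) by (simp add: bij_betw_imageI)
  from bij_betw_disjoint_Un[OF this e]
  have "bij_betw (\<lambda>x. if x \<in> D then \<phi> x else e x) (D \<union> (UNIV - D)) (\<phi> ` D \<union> (UNIV - \<phi> ` D))"
    by blast
  then have "bij (\<lambda>x. if x \<in> D then \<phi> x else e x)"
    by (simp add: Un_Diff_cancel)
  then show thesis by (rule that) simp
qed

definition pullback_op :: "(nat \<Rightarrow> nat) \<Rightarrow> (nat \<times> nat \<Rightarrow> nat) \<Rightarrow> nat \<times> nat \<Rightarrow> nat" where
  "pullback_op \<psi> G = (\<lambda>(a, b). inv_into UNIV \<psi> (G (\<psi> a, \<psi> b)))"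

lemma pullback_op_iso:
  assumes "bij \<psi>" "\<psi> 0 = 0"
  shows "\<psi> \<in> iso (grp (pullback_op \<psi> G)) (grp G)"
  using assms by (simp add: iso_def hom_def grp_def pullback_op_def bij_is_surj surj_f_inv_f)

lemma pullback_op_in_A_ops:
  assumes "G \<in> A_ops" "bij \<psi>" "\<psi> 0 = 0"
  shows "pullback_op \<psi> G \<in> A_ops"
proof -
  have cg: "comm_group (grp G)"
    using assms(1) by (simp add: A_ops_def)
  have "inv_into UNIV \<psi> \<in> hom (grp G) (grp (pullback_op \<psi> G))"
    using assms(2) by (simp add: hom_def grp_def pullback_op_def bij_is_surj surj_f_inv_f)
  from comm_group.hom_imp_img_comm_group[OF cg this]
  moreover have "range (inv_into UNIV \<psi>) = UNIV" "inv_into UNIV \<psi> 0 = 0"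
    using assms(2,3) by (simp_all add: bij_is_inj inj_imp_surj_inv inv_f_eq)
  ultimately show ?thesis
    by (simp add: A_ops_def grp_def)
qed

lemma T_ops_iso_invariant:
  assumes "H \<in> A_ops" "G \<in> T_ops" "h \<in> iso (grp H) (grp G)"
  shows "H \<in> T_ops"
proof -
  have "comm_group (grp H)" "comm_group (grp G)"
    using assms(1,2) by (auto simp: A_ops_def T_ops_def)
  then have gh: "group_hom (grp H) (grp G) h"
    using assms(3) by (simp add: group_hom_def group_hom_axioms_def comm_group_def iso_def)
  have h0: "h 0 = 0"
    using group_hom.hom_one[OF gh] by (simp add: grp_def)
  have inj: "inj h"
    using assms(3) by (simp add: iso_def grp_def bij_betw_def)
  have "a [^]\<^bsub>grp H\<^esub> n \<noteq> 0" if "a \<noteq> 0" "n > 0" for a n :: nat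
  proof
    assume "a [^]\<^bsub>grp H\<^esub> n = 0"
    moreover have "h (a [^]\<^bsub>grp H\<^esub> n) = h a [^]\<^bsub>grp G\<^esub> n"
      by (rule group_hom.hom_nat_pow[OF gh]) (simp add: grp_def)
    ultimately have "h a [^]\<^bsub>grp G\<^esub> n = 0"
      using h0 by simp
    moreover have "h a \<noteq> 0"
      using inj h0 that(1) by (metis injD)
    moreover have "\<forall>a n. a \<noteq> 0 \<and> n > 0 \<longrightarrow> a [^]\<^bsub>grp G\<^esub> (n::nat) \<noteq> (0::nat)"
      using assms(2) by (simp add: T_ops_def)
    ultimately show False
      using that(2) by simp
  qed
  then show ?thesis
    using assms(1) by (simp add: T_ops_def)
qed

text \<open>0 \<in> D is needed so that the bijection extending \<phi>|D fixes the unit.\<close>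
lemma hom_inj_on_finite_gives_iso_copy:
  assumes "G \<in> A_ops" "H \<in> T_ops" "\<phi> \<in> hom (grp G) (grp H)"
    and "finite D" "inj_on \<phi> D" "0 \<in> D"
  obtains H' where "H' \<in> T_ops" "grp H' \<cong> grp H"
    "\<And>a b. a \<in> D \<Longrightarrow> b \<in> D \<Longrightarrow> G (a, b) \<in> D \<Longrightarrow> H' (a, b) = G (a, b)"
proof -
  obtain \<psi> where \<psi>: "bij \<psi>" "\<And>x. x \<in> D \<Longrightarrow> \<psi> x = \<phi> x"
    using inj_on_finite_extends_to_bij[OF assms(4,5)] by blast
  have "group_hom (grp G) (grp H) \<phi>"
    using assms(1-3) by (simp add: A_ops_def T_ops_def group_hom_def group_hom_axioms_def comm_group_def)
  then have "\<phi> 0 = 0"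
    using group_hom.hom_one by (fastforce simp: grp_def)
  then have \<psi>0: "\<psi> 0 = 0"
    using \<psi>(2) assms(6) by simp
  have H'_iso: "\<psi> \<in> iso (grp (pullback_op \<psi> H)) (grp H)"
    using pullback_op_iso[OF \<psi>(1) \<psi>0] .
  have "pullback_op \<psi> H \<in> A_ops"
    using pullback_op_in_A_ops[OF _ \<psi>(1) \<psi>0] assms(2) by (simp add: T_ops_def)
  then have "pullback_op \<psi> H \<in> T_ops"
    using T_ops_iso_invariant[OF _ assms(2) H'_iso] by blast
  moreover have "grp (pullback_op \<psi> H) \<cong> grp H"
    using H'_iso by (auto simp: is_iso_def)
  moreover have "pullback_op \<psi> H (a, b) = G (a, b)"
    if "a \<in> D" "b \<in> D" "G (a, b) \<in> D" for a b
  proof -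
    have "H (\<psi> a, \<psi> b) = \<psi> (G (a, b))"
      using assms(3) \<psi>(2) that by (simp add: hom_def grp_def)
    then show ?thesis
      using \<psi>(1) by (simp add: pullback_op_def bij_is_inj)
  qed
  ultimately show thesis by (rule that)
qed

lemma hom_inj_on_table_support_gives_iso_copy:
  assumes "G \<in> A_ops" "H \<in> T_ops" "\<phi> \<in> hom (grp G) (grp H)"
    and table: "\<forall>i\<le>k. \<forall>j\<le>k. G (i, j) = m i j"
    and inj: "inj_on \<phi> ({1..k} \<union> {m i j | i j. i \<le> k \<and> j \<le> k})"
  obtains H' where "H' \<in> T_ops" "grp H' \<cong> grp H" "\<forall>i\<le>k. \<forall>j\<le>k. H' (i, j) = m i j"
proof -
  define D where "D = {1..k} \<union> {m i j | i j. i \<le> k \<and> j \<le> k}"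
  have "{m i j | i j. i \<le> k \<and> j \<le> k} = (\<lambda>(i, j). m i j) ` ({..k} \<times> {..k})"
    by auto
  then have "finite D" by (simp add: D_def)
  have m_in_D: "m i j \<in> D" if "i \<le> k" "j \<le> k" for i j
    using that unfolding D_def by blast
  have "monoid (grp G)"
    using assms(1) by (simp add: A_ops_def comm_group_def group_def)
  then have "G (0, 0) = 0"
    using monoid.l_one[of "grp G" 0] by (simp add: grp_def)
  then have "0 \<in> D"
    using table m_in_D[of 0 0] by simp
  then have in_D: "i \<in> D" if "i \<le> k" for i
    using that by (cases "i = 0") (auto simp: D_def)
  obtain H' where "H' \<in> T_ops" "grp H' \<cong> grp H"
    and H': "\<And>a b. a \<in> D \<Longrightarrow> b \<in> D \<Longrightarrow> G (a, b) \<in> D \<Longrightarrow> H' (a, b) = G (a, b)"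
    using hom_inj_on_finite_gives_iso_copy[OF assms(1-3) \<open>finite D\<close> _ \<open>0 \<in> D\<close>] inj
    unfolding D_def by blast
  moreover have "H' (i, j) = m i j" if "i \<le> k" "j \<le> k" for i j
    using H'[OF in_D[OF that(1)] in_D[OF that(2)]] table m_in_D[OF that] that by simp
  ultimately show thesis
    using that by blast
qed

theorem lemma2p10:
  fixes P S :: "(nat \<times> nat \<Rightarrow> nat) set"
  assumes "group_property P" and "group_property S"
    and "P \<subseteq> S" and "S \<subseteq> T_ops"
    and hyp: "\<And>(k::nat) (m::nat \<Rightarrow> nat \<Rightarrow> nat).
      {G \<in> S. \<forall>i\<le>k. \<forall>j\<le>k. G (i, j) = m i j} \<noteq> {} \<Longrightarrow>
      (\<exists>G0 \<in> {G \<in> S. \<forall>i\<le>k. \<forall>j\<le>k. G (i, j) = m i j}. \<exists>H \<in> P. \<exists>\<phi>.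
         \<phi> \<in> hom (grp G0) (grp H) \<and>
         inj_on \<phi> ({1..k} \<union> {m i j | i j. i \<le> k \<and> j \<le> k}))"
  shows "S \<subseteq> (subtopology op_topology S) closure_of P"
proof
  fix K assume "K \<in> S"
  show "K \<in> (subtopology op_topology S) closure_of P"
  proof (rule in_closure_of_op_topology_if_squares_realised[OF \<open>K \<in> S\<close>])
    fix k :: nat
    have "K \<in> {G \<in> S. \<forall>i\<le>k. \<forall>j\<le>k. G (i, j) = K (i, j)}"
      using \<open>K \<in> S\<close> by simp
    then obtain G0 H \<phi> where "G0 \<in> S" "\<forall>i\<le>k. \<forall>j\<le>k. G0 (i, j) = K (i, j)"
      and "H \<in> P" "\<phi> \<in> hom (grp G0) (grp H)"
      and "inj_on \<phi> ({1..k} \<union> {K (i, j) | i j. i \<le> k \<and> j \<le> k})"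
      using hyp[of k "\<lambda>i j. K (i, j)"] by blast
    moreover have "G0 \<in> A_ops" "H \<in> T_ops"
      using \<open>G0 \<in> S\<close> \<open>H \<in> P\<close> assms(1,4) by (auto simp: group_property_def T_ops_def)
    ultimately obtain H' where "H' \<in> T_ops" "grp H' \<cong> grp H"
      and "\<forall>i\<le>k. \<forall>j\<le>k. H' (i, j) = K (i, j)"
      using hom_inj_on_table_support_gives_iso_copy[of G0 H \<phi> k "\<lambda>i j. K (i, j)"] by blast
    moreover have "H' \<in> P"
      using \<open>H' \<in> T_ops\<close> \<open>grp H' \<cong> grp H\<close> \<open>H \<in> P\<close> assms(1)
      unfolding group_property_def by blast
    ultimately show "\<exists>H \<in> P \<inter> S. \<forall>i\<le>k. \<forall>j\<le>k. H (i, j) = K (i, j)"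
      using assms(3) by blast
  qed
qed

end
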